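(* Let $$y=\frac{(2s^2-1)(3s-1)}{2s(2s^2+2s-1)(s-1)},\qquad t=-\frac{(3s-1)^2}{8(2s^2+2s-1)(s-1)s^3}.$$ Then $y(t)$ is a solution of $\mathrm{P}_{\mathrm{VI}}$ with parameters $(\theta_1,\theta_2,\theta_3,\theta_4)=(1/3,3/4,1/3,3/4)$.
   Context: $\mathrm{P}_{\mathrm{VI}}$ is the equation $$\frac{d^2y}{dt^2}=\frac12\Big(\frac1y+\frac1{y-1}+\frac1{y-t}\Big)\Big(\frac{dy}{dt}\Big)^2-\Big(\frac1t+\frac1{t-1}+\frac1{y-t}\Big)\frac{dy}{dt}+\frac{y(y-1)(y-t)}{t^2(t-1)^2}\Big(\alpha+\beta\frac{t}{y^2}+\gamma\frac{t-1}{(y-1)^2}+\delta\frac{t(t-1)}{(y-t)^2}\Big),$$ with $\alpha=(\theta_4-1)^2/2$, $\beta=-\theta_1^2/2$, $\gamma=\theta_3^2/2$, $\delta=(1-\theta_2^2)/2$. When $y,t$ are given as rational functions of a parameter on a curve, derivatives with respect to $t$ are computed via the chain rule. *)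

theory Defs
  imports "HOL-Analysis.Analysis"
begin

definition PVI_alpha :: "complex \<Rightarrow> complex" where "PVI_alpha th4 = (th4 - 1)^2 / 2"
definition PVI_beta :: "complex \<Rightarrow> complex" where "PVI_beta th1 = - (th1^2) / 2"
definition PVI_gamma :: "complex \<Rightarrow> complex" where "PVI_gamma th3 = th3^2 / 2"
definition PVI_delta :: "complex \<Rightarrow> complex" where "PVI_delta th2 = (1 - th2^2) / 2"

definition PVI_rhs ::
  "complex \<Rightarrow> complex \<Rightarrow> complex \<Rightarrow> complex \<Rightarrow> complex \<Rightarrow> complex \<Rightarrow> complex \<Rightarrow> complex" where
  "PVI_rhs th1 th2 th3 th4 t y y1 =
     (1/2) * (1/y + 1/(y - 1) + 1/(y - t)) * y1^2
     - (1/t + 1/(t - 1) + 1/(y - t)) * y1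
     + (y * (y - 1) * (y - t)) / (t^2 * (t - 1)^2) *
       (PVI_alpha th4 + PVI_beta th1 * t / y^2 + PVI_gamma th3 * (t - 1) / (y - 1)^2
        + PVI_delta th2 * t * (t - 1) / (y - t)^2)"

text \<open>Derivatives with respect to t along a parametrised curve s \<mapsto> (T s, Y s), via the chain rule.\<close>
definition dY_dT :: "(complex \<Rightarrow> complex) \<Rightarrow> (complex \<Rightarrow> complex) \<Rightarrow> complex \<Rightarrow> complex" where
  "dY_dT Y T s = deriv Y s / deriv T s"

definition d2Y_dT2 :: "(complex \<Rightarrow> complex) \<Rightarrow> (complex \<Rightarrow> complex) \<Rightarrow> complex \<Rightarrow> complex" where
  "d2Y_dT2 Y T s = deriv (dY_dT Y T) s / deriv T s"

definition yfun :: "complex \<Rightarrow> complex" where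
  "yfun s = ((2 * s ^ 2 - 1) * (3 * s - 1)) / (2 * s*(2 * s ^ 2 + 2 * s - 1)*(s - 1))"

definition tfun :: "complex \<Rightarrow> complex" where
  "tfun s = - ((3 * s - 1)^2) / (8*(2 * s ^ 2 + 2 * s - 1)*(s - 1) * s ^ 3)"

end

theory Submission
  imports Defs
begin

text \<open>
  Everything is rational in \<open>s\<close>. By the chain rule \<open>dy/dt = y\<^sub>s / t\<^sub>s\<close> and
  \<open>d\<^sup>2y/dt\<^sup>2 = (dy/dt)\<^sub>s / t\<^sub>s\<close>, and both simplify to short explicit fractions.
  Since \<open>y\<close>, \<open>t\<close>, \<open>y - 1\<close>, \<open>t - 1\<close> and \<open>y - t\<close> all factor into linear and
  quadratic polynomials in \<open>s\<close>, each of the three coefficient groups on the right-hand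
  side of \<open>P\<^sub>V\<^sub>I\<close> becomes a single fraction in these factors, and the equation
  reduces to one polynomial identity between numerators.
\<close>

lemma DERIV_divide_cross:
  fixes f g :: "'a \<Rightarrow> 'a::real_normed_field"
  assumes "(f has_field_derivative f') (at z)" and "(g has_field_derivative g') (at z)"
    and "g z \<noteq> 0" and "d \<noteq> 0"
    and "(f' * g z - f z * g') * d = n * (g z)\<^sup>2"
  shows "((\<lambda>z. f z / g z) has_field_derivative n / d) (at z)"
proof -
  have "(f' * g z - f z * g') / (g z * g z) = n / d"
    using assms(3-5) by (simp add: frac_eq_eq power2_eq_square)
  then show ?thesis
    using DERIV_divide[OF assms(1-3)] by simp
qed

lemma dY_dT_eq:
  assumes "(Y has_field_derivative Y') (at s)" and "(T has_field_derivative T') (at s)"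
  shows "dY_dT Y T s = Y' / T'"
  using assms by (simp add: dY_dT_def DERIV_imp_deriv)

lemma d2Y_dT2_eq:
  assumes "open S" and "s \<in> S"
    and "\<And>z. z \<in> S \<Longrightarrow> (Y has_field_derivative Y' z) (at z)"
    and "\<And>z. z \<in> S \<Longrightarrow> (T has_field_derivative T' z) (at z)"
    and "\<And>z. z \<in> S \<Longrightarrow> Y' z / T' z = V z"
    and "(V has_field_derivative V') (at s)"
  shows "d2Y_dT2 Y T s = V' / T' s"
proof -
  have "(dY_dT Y T has_field_derivative V') (at s)"
  proof (rule has_field_derivative_transform_within_open[OF assms(6,1,2)])
    show "V z = dY_dT Y T z" if "z \<in> S" for z
      using dY_dT_eq[OF assms(3,4)[OF that]] assms(5)[OF that] by simp
  qed
  then show ?thesis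
    using assms(2,4) by (simp add: d2Y_dT2_def DERIV_imp_deriv)
qed

definition tfun' :: "complex \<Rightarrow> complex" where
  "tfun' s = 3 * (3 * s - 1) * (2 * s - 1)^3 * (s + 1)
     / (8 * s^4 * (s - 1)^2 * (2 * s^2 + 2 * s - 1)^2)"

definition yfun' :: "complex \<Rightarrow> complex" where
  "yfun' s = - (12 * s^6 - 8 * s^5 - 4 * s^3 + 11 * s^2 - 6 * s + 1)
     / (2 * s^2 * (s - 1)^2 * (2 * s^2 + 2 * s - 1)^2)"

definition dydt :: "complex \<Rightarrow> complex" where
  "dydt s = - 4 * s^2 * (12 * s^6 - 8 * s^5 - 4 * s^3 + 11 * s^2 - 6 * s + 1)
     / (3 * (3 * s - 1) * (2 * s - 1)^3 * (s + 1))"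

definition dydt' :: "complex \<Rightarrow> complex" where
  "dydt' s = - 8 * s * (s - 1) * (2 * s^2 + 2 * s - 1)
       * (54 * s^6 - 30 * s^5 + 15 * s^4 - 8 * s^3 + 12 * s^2 - 6 * s + 1)
     / (3 * (3 * s - 1)^2 * (2 * s - 1)^4 * (s + 1)^2)"

lemma tfun_has_derivative:
  assumes nz: "s \<noteq> 0" "s - 1 \<noteq> 0" "2 * s^2 + 2 * s - 1 \<noteq> 0"
  shows "(tfun has_field_derivative tfun' s) (at s)"
  unfolding tfun_def[abs_def] tfun'_def
proof (rule DERIV_divide_cross)
  show "((\<lambda>s. - ((3 * s - 1)^2)) has_field_derivative - 6 * (3 * s - 1)) (at s)"
    by (rule derivative_eq_intros refl)+ (simp add: eval_nat_numeral; algebra)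
  show "((\<lambda>s. 8 * (2 * s^2 + 2 * s - 1) * (s - 1) * s^3) has_field_derivative
      24 * s^2 * (4 * s^3 - 4 * s + 1)) (at s)"
    by (rule derivative_eq_intros refl)+ (simp add: eval_nat_numeral; algebra)
qed ((intro no_zero_divisors power_not_zero; use nz in simp) | algebra)+

lemma yfun_has_derivative:
  assumes nz: "s \<noteq> 0" "s - 1 \<noteq> 0" "2 * s^2 + 2 * s - 1 \<noteq> 0"
  shows "(yfun has_field_derivative yfun' s) (at s)"
  unfolding yfun_def[abs_def] yfun'_def
proof (rule DERIV_divide_cross)
  show "((\<lambda>s. (2 * s^2 - 1) * (3 * s - 1)) has_field_derivative 18 * s^2 - 4 * s - 3) (at s)"
    by (rule derivative_eq_intros refl)+ (simp add: eval_nat_numeral; algebra)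
  show "((\<lambda>s. 2 * s * (2 * s^2 + 2 * s - 1) * (s - 1)) has_field_derivative
      16 * s^3 - 12 * s + 2) (at s)"
    by (rule derivative_eq_intros refl)+ (simp add: eval_nat_numeral; algebra)
qed ((intro no_zero_divisors power_not_zero; use nz in simp) | algebra)+

lemma dydt_has_derivative:
  assumes nz: "3 * s - 1 \<noteq> 0" "2 * s - 1 \<noteq> 0" "s + 1 \<noteq> 0"
  shows "(dydt has_field_derivative dydt' s) (at s)"
  unfolding dydt_def[abs_def] dydt'_def
proof (rule DERIV_divide_cross)
  show "((\<lambda>s. - 4 * s^2 * (12 * s^6 - 8 * s^5 - 4 * s^3 + 11 * s^2 - 6 * s + 1))
      has_field_derivative - 8 * s * (48 * s^6 - 28 * s^5 - 10 * s^3 + 22 * s^2 - 9 * s + 1)) (at s)"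
    by (rule derivative_eq_intros refl)+ (simp add: eval_nat_numeral; algebra)
  show "((\<lambda>s. 3 * (3 * s - 1) * (2 * s - 1)^3 * (s + 1)) has_field_derivative
      6 * (60 * s^4 - 40 * s^3 - 21 * s^2 + 21 * s - 4)) (at s)"
    by (rule derivative_eq_intros refl)+ (simp add: eval_nat_numeral; algebra)
qed ((intro no_zero_divisors power_not_zero; use nz in simp) | algebra)+

lemma yfun'_divide_tfun':
  assumes nz: "s \<noteq> 0" "s - 1 \<noteq> 0" "2 * s^2 + 2 * s - 1 \<noteq> 0"
    "3 * s - 1 \<noteq> 0" "2 * s - 1 \<noteq> 0" "s + 1 \<noteq> 0"
  shows "yfun' s / tfun' s = dydt s"
  unfolding yfun'_def tfun'_def dydt_def divide_divide_times_eq
  by (subst frac_eq_eq) ((intro no_zero_divisors power_not_zero; use nz in simp) | algebra)+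

lemma dydt'_divide_tfun':
  assumes nz: "s \<noteq> 0" "s - 1 \<noteq> 0" "2 * s^2 + 2 * s - 1 \<noteq> 0"
    "3 * s - 1 \<noteq> 0" "2 * s - 1 \<noteq> 0" "s + 1 \<noteq> 0"
  shows "dydt' s / tfun' s = - 64 * s^5 * (s - 1)^3 * (2 * s^2 + 2 * s - 1)^3
       * (54 * s^6 - 30 * s^5 + 15 * s^4 - 8 * s^3 + 12 * s^2 - 6 * s + 1)
     / (9 * (3 * s - 1)^3 * (2 * s - 1)^7 * (s + 1)^3)"
  unfolding dydt'_def tfun'_def divide_divide_times_eq
  by (subst frac_eq_eq) ((intro no_zero_divisors power_not_zero; use nz in simp) | algebra)+

lemma yfun_minus_one:
  assumes nz: "s \<noteq> 0" "s - 1 \<noteq> 0" "2 * s^2 + 2 * s - 1 \<noteq> 0"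
  shows "yfun s - 1 = - ((2 * s - 1) * (s + 1) * (2 * s^2 - 4 * s + 1))
           / (2 * s * (2 * s^2 + 2 * s - 1) * (s - 1))"
proof -
  have den: "2 * s * (2 * s^2 + 2 * s - 1) * (s - 1) \<noteq> 0"
    using nz by (intro no_zero_divisors) simp_all
  show ?thesis
    unfolding yfun_def divide_diff_eq_iff[OF den] frac_eq_eq[OF den den] by algebra
qed

lemma tfun_minus_one:
  assumes nz: "s \<noteq> 0" "s - 1 \<noteq> 0" "2 * s^2 + 2 * s - 1 \<noteq> 0"
  shows "tfun s - 1 = - ((2 * s - 1)^4 * (s + 1)^2) / (8 * (2 * s^2 + 2 * s - 1) * (s - 1) * s^3)"
proof -
  have den: "8 * (2 * s^2 + 2 * s - 1) * (s - 1) * s^3 \<noteq> 0"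
    using nz by (intro no_zero_divisors power_not_zero) simp_all
  show ?thesis
    unfolding tfun_def divide_diff_eq_iff[OF den] frac_eq_eq[OF den den] by algebra
qed

lemma yfun_minus_tfun:
  assumes nz: "s \<noteq> 0" "s - 1 \<noteq> 0" "2 * s^2 + 2 * s - 1 \<noteq> 0"
  shows "yfun s - tfun s = (3 * s - 1) * (2 * s - 1) * (s + 1) * (4 * s^2 - 2 * s + 1)
           / (8 * (2 * s^2 + 2 * s - 1) * (s - 1) * s^3)"
proof -
  have den_y: "2 * s * (2 * s^2 + 2 * s - 1) * (s - 1) \<noteq> 0"
    using nz by (intro no_zero_divisors) simp_all
  have den_t: "8 * (2 * s^2 + 2 * s - 1) * (s - 1) * s^3 \<noteq> 0"
    using nz by (intro no_zero_divisors power_not_zero) simp_all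
  show ?thesis
    unfolding yfun_def tfun_def diff_frac_eq[OF den_y den_t]
    by (subst frac_eq_eq) ((intro no_zero_divisors power_not_zero; use nz in simp) | algebra)+
qed

lemma dydt'_divide_tfun'_eq_PVI_rhs:
  assumes "s \<noteq> 0" "s - 1 \<noteq> 0" "2 * s^2 + 2 * s - 1 \<noteq> 0"
    "3 * s - 1 \<noteq> 0" "2 * s - 1 \<noteq> 0" "s + 1 \<noteq> 0"
    "2 * s^2 - 1 \<noteq> 0" "2 * s^2 - 4 * s + 1 \<noteq> 0" "4 * s^2 - 2 * s + 1 \<noteq> 0"
  shows "dydt' s / tfun' s = PVI_rhs (1/3) (3/4) (1/3) (3/4) (tfun s) (yfun s) (dydt s)"
proof -
  \<comment> \<open>As opaque variables the factors are not multiplied out by \<open>field_simps\<close>,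
    which can then cancel them using their non-vanishing.\<close>
  define l1 where "l1 = s - 1"
  define l2 where "l2 = 2 * s - 1"
  define l3 where "l3 = 3 * s - 1"
  define l4 where "l4 = s + 1"
  define q0 where "q0 = 2 * s^2 + 2 * s - 1"
  define q1 where "q1 = 2 * s^2 - 1"
  define q2 where "q2 = 2 * s^2 - 4 * s + 1"
  define q3 where "q3 = 4 * s^2 - 2 * s + 1"
  define n where "n = 12 * s^6 - 8 * s^5 - 4 * s^3 + 11 * s^2 - 6 * s + 1"
  define k where "k = 54 * s^6 - 30 * s^5 + 15 * s^4 - 8 * s^3 + 12 * s^2 - 6 * s + 1"
  note factors = l1_def l2_def l3_def l4_def q0_def q1_def q2_def q3_def n_def k_def
  have nz: "s \<noteq> 0" "l1 \<noteq> 0" "l2 \<noteq> 0" "l3 \<noteq> 0" "l4 \<noteq> 0" "q0 \<noteq> 0" "q1 \<noteq> 0" "q2 \<noteq> 0" "q3 \<noteq> 0"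
    unfolding factors by (fact assms)+
  have y: "yfun s = q1 * l3 / (2 * s * q0 * l1)"
    unfolding yfun_def factors ..
  have t: "tfun s = - (l3^2) / (8 * q0 * l1 * s^3)"
    unfolding tfun_def factors ..
  have y1: "dydt s = - 4 * s^2 * n / (3 * l3 * l2^3 * l4)"
    unfolding dydt_def factors ..
  have lhs: "dydt' s / tfun' s = - 64 * s^5 * l1^3 * q0^3 * k / (9 * l3^3 * l2^7 * l4^3)"
    using dydt'_divide_tfun'[OF assms(1-6)] unfolding factors .
  have ym1: "yfun s - 1 = - (l2 * l4 * q2) / (2 * s * q0 * l1)"
    using yfun_minus_one[OF assms(1-3)] unfolding factors .
  have tm1: "tfun s - 1 = - (l2^4 * l4^2) / (8 * q0 * l1 * s^3)"
    using tfun_minus_one[OF assms(1-3)] unfolding factors .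
  have ymt: "yfun s - tfun s = l3 * l2 * l4 * q3 / (8 * q0 * l1 * s^3)"
    using yfun_minus_tfun[OF assms(1-3)] unfolding factors .
  define nA where "nA = l2 * l4 * q2 * q3 - l3 * q1 * q3 + 4 * s^2 * q1 * q2"
  define nB where "nB = - (l2^4 * l4^2 * q3) - l3^2 * q3 + l3 * l2^3 * l4"
  define nD where "nD = 18 * s * q1^2 * q2^2 * q3^2 + 16 * l1 * q0 * q2^2 * q3^2
      - 16 * l2^2 * l1 * q0 * q1^2 * q3^2 + 126 * s * l2^2 * q1^2 * q2^2"
  have A: "1 / yfun s + 1 / (yfun s - 1) + 1 / (yfun s - tfun s)
      = 2 * s * l1 * q0 * nA / (l3 * l2 * l4 * q1 * q2 * q3)"
    unfolding ym1 ymt unfolding y nA_def using nz by (simp add: field_simps eval_nat_numeral)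
  have B: "1 / tfun s + 1 / (tfun s - 1) + 1 / (yfun s - tfun s)
      = 8 * s^3 * l1 * q0 * nB / (l3^2 * l2^4 * l4^2 * q3)"
    unfolding tm1 ymt unfolding t nB_def using nz by (simp add: field_simps eval_nat_numeral)
  have C: "yfun s * (yfun s - 1) * (yfun s - tfun s) / ((tfun s)^2 * (tfun s - 1)^2)
      = - 128 * s^7 * l1 * q0 * q1 * q2 * q3 / (l3^2 * l2^6 * l4^2)"
    unfolding ym1 ymt tm1 unfolding y t using nz by (simp add: field_simps eval_nat_numeral)
  have D: "PVI_alpha (3/4) + PVI_beta (1/3) * tfun s / (yfun s)^2
      + PVI_gamma (1/3) * (tfun s - 1) / (yfun s - 1)^2
      + PVI_delta (3/4) * tfun s * (tfun s - 1) / (yfun s - tfun s)^2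
      = nD / (576 * s * q1^2 * q2^2 * q3^2)"
    unfolding ym1 ymt tm1 unfolding y t nD_def PVI_alpha_def PVI_beta_def PVI_gamma_def PVI_delta_def
    using nz by (simp add: field_simps eval_nat_numeral)
  have numerator: "16 * nA * n^2 + 96 * nB * n * q1 * q2 - 2 * s * l3 * l2 * l4 * nD
      = - 64 * l1^2 * q0^2 * k * q1 * q2 * q3"
    unfolding nA_def nB_def nD_def factors by algebra
  have "PVI_rhs (1/3) (3/4) (1/3) (3/4) (tfun s) (yfun s) (dydt s)
      = (1/2) * (2 * s * l1 * q0 * nA / (l3 * l2 * l4 * q1 * q2 * q3)) * (dydt s)^2
        - (8 * s^3 * l1 * q0 * nB / (l3^2 * l2^4 * l4^2 * q3)) * dydt s
        + (- 128 * s^7 * l1 * q0 * q1 * q2 * q3 / (l3^2 * l2^6 * l4^2))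
          * (nD / (576 * s * q1^2 * q2^2 * q3^2))"
    unfolding PVI_rhs_def A B C D ..
  also have "\<dots> = s^5 * l1 * q0 * (16 * nA * n^2 + 96 * nB * n * q1 * q2 - 2 * s * l3 * l2 * l4 * nD)
      / (9 * l3^3 * l2^7 * l4^3 * q1 * q2 * q3)"
    unfolding y1 using nz by (simp add: field_simps eval_nat_numeral)
  also have "\<dots> = - 64 * s^5 * l1^3 * q0^3 * k / (9 * l3^3 * l2^7 * l4^3)"
    unfolding numerator using nz by (simp add: field_simps eval_nat_numeral)
  finally show ?thesis
    unfolding lhs by (rule sym)
qed

lemma curve_factors_nonzero:
  assumes nz: "s \<noteq> 0" "s - 1 \<noteq> 0" "2 * s^2 + 2 * s - 1 \<noteq> 0"
    and "tfun' s \<noteq> 0" "yfun s \<noteq> 0" "yfun s \<noteq> 1" "yfun s \<noteq> tfun s"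
  shows "3 * s - 1 \<noteq> 0" "2 * s - 1 \<noteq> 0" "s + 1 \<noteq> 0" "2 * s^2 - 1 \<noteq> 0"
    "2 * s^2 - 4 * s + 1 \<noteq> 0" "4 * s^2 - 2 * s + 1 \<noteq> 0"
proof -
  show "3 * s - 1 \<noteq> 0" "2 * s - 1 \<noteq> 0" "s + 1 \<noteq> 0"
    using \<open>tfun' s \<noteq> 0\<close> by (auto simp: tfun'_def)
  show "2 * s^2 - 1 \<noteq> 0"
    using \<open>yfun s \<noteq> 0\<close> by (auto simp: yfun_def)
  show "2 * s^2 - 4 * s + 1 \<noteq> 0"
  proof
    assume r1: "2 * s^2 - 4 * s + 1 = 0"
    have "yfun s - 1 = 0"
      using yfun_minus_one[OF nz] unfolding r1 by simp
    with \<open>yfun s \<noteq> 1\<close> show False by simp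
  qed
  show "4 * s^2 - 2 * s + 1 \<noteq> 0"
  proof
    assume r2: "4 * s^2 - 2 * s + 1 = 0"
    have "yfun s - tfun s = 0"
      using yfun_minus_tfun[OF nz] unfolding r2 by simp
    with \<open>yfun s \<noteq> tfun s\<close> show False by simp
  qed
qed

theorem mainTheorem7:
  fixes s :: complex
  assumes "s \<noteq> 0" and "s \<noteq> 1" and "2 * s ^ 2 + 2 * s - 1 \<noteq> 0"
    and "deriv tfun s \<noteq> 0"
    and "tfun s \<noteq> 0" and "tfun s \<noteq> 1"
    and "yfun s \<noteq> 0" and "yfun s \<noteq> 1" and "yfun s \<noteq> tfun s"
  shows "d2Y_dT2 yfun tfun s =
         PVI_rhs (1/3) (3/4) (1/3) (3/4) (tfun s) (yfun s) (dY_dT yfun tfun s)"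
proof -
  have nz: "s \<noteq> 0" "s - 1 \<noteq> 0" "2 * s^2 + 2 * s - 1 \<noteq> 0"
    using assms(1-3) by simp_all
  have "deriv tfun s = tfun' s"
    by (rule DERIV_imp_deriv[OF tfun_has_derivative[OF nz]])
  then have nz': "3 * s - 1 \<noteq> 0" "2 * s - 1 \<noteq> 0" "s + 1 \<noteq> 0" "2 * s^2 - 1 \<noteq> 0"
      "2 * s^2 - 4 * s + 1 \<noteq> 0" "4 * s^2 - 2 * s + 1 \<noteq> 0"
    using curve_factors_nonzero[OF nz _ assms(7-9)] assms(4) by simp_all
  define S where "S = {z::complex. z \<noteq> 0 \<and> z - 1 \<noteq> 0 \<and> 2 * z^2 + 2 * z - 1 \<noteq> 0
      \<and> 3 * z - 1 \<noteq> 0 \<and> 2 * z - 1 \<noteq> 0 \<and> z + 1 \<noteq> 0}"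
  have "open S"
    unfolding S_def by (intro open_Collect_conj open_Collect_neq continuous_intros)
  have "s \<in> S"
    unfolding S_def using nz nz' by blast
  have "d2Y_dT2 yfun tfun s = dydt' s / tfun' s"
  proof (rule d2Y_dT2_eq[OF \<open>open S\<close> \<open>s \<in> S\<close>])
    fix z assume "z \<in> S"
    then have z: "z \<noteq> 0" "z - 1 \<noteq> 0" "2 * z^2 + 2 * z - 1 \<noteq> 0"
        "3 * z - 1 \<noteq> 0" "2 * z - 1 \<noteq> 0" "z + 1 \<noteq> 0"
      unfolding S_def by blast+
    show "(yfun has_field_derivative yfun' z) (at z)"
      using z(1-3) by (rule yfun_has_derivative)
    show "(tfun has_field_derivative tfun' z) (at z)"
      using z(1-3) by (rule tfun_has_derivative)
    show "yfun' z / tfun' z = dydt z"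
      using z by (rule yfun'_divide_tfun')
  next
    show "(dydt has_field_derivative dydt' s) (at s)"
      by (rule dydt_has_derivative) (fact nz')+
  qed
  moreover have "dY_dT yfun tfun s = dydt s"
    using dY_dT_eq[OF yfun_has_derivative[OF nz] tfun_has_derivative[OF nz]]
      yfun'_divide_tfun'[OF nz nz'(1-3)] by simp
  ultimately show ?thesis
    using dydt'_divide_tfun'_eq_PVI_rhs[OF nz nz'] by simp
qed

end
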